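(* Let $a,b,d\in\mathbb C$ with $a\notin\mathbb Z$ and $d\notin\{0,-1,-2,\dots\}$. Then, as an identity of formal power series in $x,y$, $$\mathrm H_4(a,b;d;x,y)={}_1F_1(a;d;x)\,{}_1F_1(b;1-a;-y)+\sum_{k=1}^\infty\sum_{l=1}^k\frac{(-1)^{k+l}(k-1)!}{(l-1)!\,l!\,(k-l)!}\,\frac{(b)_l}{(1-a)_l(d)_k}\,x^ky^l\,{}_1F_1(a+k;d+k;x)\,{}_1F_1(b+l;1-a+l;-y).$$
   Context: Pochhammer symbol: $(\lambda)_k=\Gamma(\lambda+k)/\Gamma(\lambda)$ for every integer $k$ (possibly negative) whenever defined; $(\lambda)_0=1$. ${}_1F_1(a;c;x)=\sum_{k\ge0}\frac{(a)_k}{(c)_k k!}x^k$. Confluent Horn function $\mathrm H_4(a,b;d;x,y)=\sum_{p,q\ge0}\frac{(a)_{p-q}(b)_q}{(d)_p\,p!\,q!}x^py^q$. All functions are regarded as formal power series in $x,y$; the infinite double sum converges in the formal (degree) topology. *)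

theory Defs
  imports "HOL-Computational_Algebra.Formal_Power_Series"
begin

text \<open>Bivariate formal power series over the complex numbers are modelled as
  complex fps fps: the outer variable is x, the inner variable is y, so the
  coefficient of x^p y^q of F is fps_nth (fps_nth F p) q.\<close>

type_synonym fps2 = "complex fps fps"

definition fpsX2 :: fps2 where "fpsX2 = fps_X"
definition fpsY2 :: fps2 where "fpsY2 = fps_const fps_X"

definition coeff2 :: "fps2 \<Rightarrow> nat \<Rightarrow> nat \<Rightarrow> complex" where
  "coeff2 F p q = fps_nth (fps_nth F p) q"

text \<open>Pochhammer symbol with integer index: (lambda)_k = Gamma(lambda+k)/Gamma(lambda).
  For k = -n < 0 this is 1/((lambda-1)(lambda-2)...(lambda-n)) = 1/(lambda-n)_n.\<close>
definition poch_int :: "complex \<Rightarrow> int \<Rightarrow> complex" where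
  "poch_int lam k = (if 0 \<le> k then pochhammer lam (nat k)
                     else inverse (pochhammer (lam + of_int k) (nat (- k))))"

definition hyp1F1_coeff :: "complex \<Rightarrow> complex \<Rightarrow> nat \<Rightarrow> complex" where
  "hyp1F1_coeff a c k = pochhammer a k / (pochhammer c k * fact k)"

definition hyp1F1_x :: "complex \<Rightarrow> complex \<Rightarrow> fps2" where
  "hyp1F1_x a c = Abs_fps (\<lambda>k. fps_const (hyp1F1_coeff a c k))"

definition hyp1F1_negy :: "complex \<Rightarrow> complex \<Rightarrow> fps2" where
  "hyp1F1_negy a c = fps_const (Abs_fps (\<lambda>k. hyp1F1_coeff a c k * (-1) ^ k))"

definition Horn_H4 :: "complex \<Rightarrow> complex \<Rightarrow> complex \<Rightarrow> fps2" where
  "Horn_H4 a b d = Abs_fps (\<lambda>p. Abs_fps (\<lambda>q.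
      poch_int a (int p - int q) * pochhammer b q / (pochhammer d p * fact p * fact q)))"

definition fps2_sums :: "(nat \<Rightarrow> fps2) \<Rightarrow> fps2 \<Rightarrow> bool" where
  "fps2_sums f S \<longleftrightarrow> (\<forall>N. \<exists>K. \<forall>n\<ge>K. \<forall>p q. p + q < N \<longrightarrow>
       coeff2 (\<Sum>k<n. f k) p q = coeff2 S p q)"

end

theory Submission
  imports Defs
begin

text \<open>Compare coefficients of \<open>x^p y^q\<close>. Since \<open>a \<notin> \<int>\<close>, the reflection
  \<open>(a)\<^sub>p\<^sub>-\<^sub>q (1-a)\<^sub>q (-1)^q = (a-q)\<^sub>p\<close> holds for every sign of \<open>p - q\<close>, so the coefficient
  of \<open>H4 - \<^sub>1F\<^sub>1 \<^sub>1F\<^sub>1\<close> is a fixed multiple of \<open>(a-q)\<^sub>p - (a)\<^sub>p\<close>. Expanding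
  \<open>(a-q)\<^sub>p = \<Sum>\<^sub>k C(p,k) (-1)^k (q)\<^sub>k (a+k)\<^sub>p\<^sub>-\<^sub>k\<close> and splitting
  \<open>(q)\<^sub>k / k! = C(q+k-1,k) = \<Sum>\<^sub>l C(k-1,l-1) C(q,l)\<close> gives exactly the coefficient of the
  double series, to which only the finitely many terms with \<open>k \<le> p\<close> contribute.\<close>

text \<open>Vandermonde's convolution of a falling and a rising factorial:
  \<open>(-1)^k (w)\<^sub>k\<close> is the falling factorial of \<open>-w\<close>.\<close>

lemma pochhammer_minus_binomial_sum:
  fixes a w :: "'a::comm_ring_1"
  shows "pochhammer (a - w) p
    = (\<Sum>k\<le>p. of_nat (p choose k) * (-1)^k * pochhammer w k * pochhammer (a + of_nat k) (p - k))"
proof (induction p arbitrary: a)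
  case 0
  then show ?case by simp
next
  case (Suc p a)
  define h where "h k = (-1)^k * pochhammer w k * pochhammer (a + of_nat k) (Suc p - k)" for k
  have h_Suc: "h (Suc k) = - (w + of_nat k) * (-1)^k * pochhammer w k * pochhammer (a + 1 + of_nat k) (p - k)"
    for k by (simp add: h_def pochhammer_rec' algebra_simps)
  have h_le: "h k = (a + of_nat k) * (-1)^k * pochhammer w k * pochhammer (a + 1 + of_nat k) (p - k)"
    if "k \<le> p" for k
    using that by (simp add: h_def Suc_diff_le pochhammer_rec algebra_simps)
  have "pochhammer (a - w) (Suc p) = (a - w) * pochhammer (a + 1 - w) p"
    by (simp add: pochhammer_rec algebra_simps)
  also have "\<dots> = (\<Sum>k\<le>p. of_nat (p choose k) * h k) + (\<Sum>k\<le>p. of_nat (p choose k) * h (Suc k))"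
    unfolding Suc[of "a + 1"] sum_distrib_left sum.distrib[symmetric]
    by (intro sum.cong refl) (simp add: h_le h_Suc algebra_simps)
  also have "\<dots> = (\<Sum>k\<le>Suc p. of_nat (p choose k) * h k) + (\<Sum>k\<le>p. of_nat (p choose k) * h (Suc k))"
    by (simp add: binomial_eq_0)
  also have "\<dots> = (\<Sum>k\<le>Suc p. of_nat (Suc p choose k) * h k)"
    unfolding sum.atMost_Suc_shift by (simp add: ring_distribs sum.distrib)
  finally show ?case by (simp add: h_def mult.assoc)
qed

lemma sum_choose_pred_mult_choose:
  assumes "1 \<le> k"
  shows "(\<Sum>l\<in>{1..k}. ((k - 1) choose (l - 1)) * (q choose l)) = (q + k - 1) choose k"
proof -
  have "(q + k - 1) choose k = (\<Sum>l\<le>k. (q choose l) * ((k - 1) choose (k - l)))"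
    using vandermonde[of q "k - 1" k] assms by simp
  also have "\<dots> = (\<Sum>l\<in>{1..k}. (q choose l) * ((k - 1) choose (k - l)))"
    using assms by (intro sum.mono_neutral_right) auto
  also have "\<dots> = (\<Sum>l\<in>{1..k}. ((k - 1) choose (l - 1)) * (q choose l))"
    using binomial_symmetric[of "l - 1" "k - 1" for l] by (intro sum.cong refl) auto
  finally show ?thesis by simp
qed

lemma pochhammer_of_nat_eq_fact_mult_choose:
  "pochhammer (of_nat q :: 'a::field_char_0) k = fact k * of_nat ((q + k - 1) choose k)"
proof (cases "q = 0")
  case True
  then show ?thesis by (cases k) (simp_all add: pochhammer_0_left)
next
  case False
  then have "of_nat (q + k - 1) - of_nat k + 1 = (of_nat q :: 'a)"
    by (simp add: of_nat_diff)
  then show ?thesis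
    using gbinomial_pochhammer'[of "of_nat (q + k - 1) :: 'a" k] by (simp add: binomial_gbinomial)
qed

lemma pochhammer_nonzero_if_not_Ints:
  fixes x :: "'a::field_char_0"
  assumes "x \<notin> \<int>"
  shows "pochhammer x n \<noteq> 0"
  using assms by (auto simp: pochhammer_eq_0_iff)

lemma poch_int_diff_reflection:
  assumes "a \<notin> \<int>"
  shows "poch_int a (int p - int q) * pochhammer (1 - a) q * (-1)^q = pochhammer (a - of_nat q) p"
proof -
  have reflect: "pochhammer (1 - a) q * (-1)^q = pochhammer (a - of_nat q) q"
    using pochhammer_minus[of "a - 1" q] by (simp add: algebra_simps)
  show ?thesis
  proof (cases "q \<le> p")
    case True
    then have "poch_int a (int p - int q) = pochhammer a (p - q)"
      by (simp add: poch_int_def nat_diff_distrib)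
    with True reflect show ?thesis
      using pochhammer_product[of q p "a - of_nat q"] by (simp add: mult_ac)
  next
    case False
    define r where "r = pochhammer (a - of_nat q + of_nat p) (q - p)"
    have "a - of_nat q + of_nat p \<notin> \<int>"
      using assms by (metis Ints_add Ints_diff Ints_of_nat add_diff_cancel_right diff_add_cancel)
    then have "r \<noteq> 0"
      unfolding r_def by (rule pochhammer_nonzero_if_not_Ints)
    moreover have "poch_int a (int p - int q) = inverse r"
      using False by (simp add: r_def poch_int_def nat_diff_distrib algebra_simps)
    moreover have "pochhammer (a - of_nat q) q = pochhammer (a - of_nat q) p * r"
      using False unfolding r_def by (intro pochhammer_product) simp
    ultimately show ?thesis
      using reflect by (simp add: mult.assoc)
  qed
qed

lemma poch_int_diff_expansion:
  assumes "a \<notin> \<int>"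
  shows "poch_int a (int p - int q) * pochhammer (1 - a) q * (-1)^q - pochhammer a p
    = (\<Sum>k\<in>{1..p}. \<Sum>l\<in>{1..k}. (-1)^k * of_nat (p choose k) * fact k
        * of_nat ((k - 1) choose (l - 1)) * of_nat (q choose l) * pochhammer (a + of_nat k) (p - k))"
proof -
  have "pochhammer (a - of_nat q) p = pochhammer a p
      + (\<Sum>k\<in>{1..p}. of_nat (p choose k) * (-1)^k * pochhammer (of_nat q) k * pochhammer (a + of_nat k) (p - k))"
    unfolding pochhammer_minus_binomial_sum atMost_atLeast0 by (simp add: sum.atLeast_Suc_atMost)
  also have "\<dots> = pochhammer a p
      + (\<Sum>k\<in>{1..p}. \<Sum>l\<in>{1..k}. (-1)^k * of_nat (p choose k) * fact k
          * of_nat ((k - 1) choose (l - 1)) * of_nat (q choose l) * pochhammer (a + of_nat k) (p - k))"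
  proof (intro arg_cong2[where f = "(+)"] sum.cong refl)
    fix k assume "k \<in> {1..p}"
    then have "(\<Sum>l\<in>{1..k}. of_nat ((k - 1) choose (l - 1)) * of_nat (q choose l))
        = (of_nat ((q + k - 1) choose k) :: complex)"
      using sum_choose_pred_mult_choose[of k q] by (simp flip: of_nat_mult of_nat_sum)
    then have "of_nat (p choose k) * (-1)^k * pochhammer (of_nat q) k * pochhammer (a + of_nat k) (p - k)
      = (-1)^k * of_nat (p choose k) * fact k
          * (\<Sum>l\<in>{1..k}. of_nat ((k - 1) choose (l - 1)) * of_nat (q choose l))
          * pochhammer (a + of_nat k) (p - k)"
      unfolding pochhammer_of_nat_eq_fact_mult_choose by simp
    then show "of_nat (p choose k) * (-1)^k * pochhammer (of_nat q) k * pochhammer (a + of_nat k) (p - k)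
      = (\<Sum>l\<in>{1..k}. (-1)^k * of_nat (p choose k) * fact k
          * of_nat ((k - 1) choose (l - 1)) * of_nat (q choose l) * pochhammer (a + of_nat k) (p - k))"
      by (simp add: sum_distrib_left sum_distrib_right mult_ac)
  qed
  finally show ?thesis
    using poch_int_diff_reflection[OF assms] by simp
qed

lemma fps2_sums_if_coeff_stable:
  assumes "\<And>n p q. p < n \<Longrightarrow> coeff2 (\<Sum>k<n. f k) p q = coeff2 S p q"
  shows "fps2_sums f S"
  unfolding fps2_sums_def using assms by (meson add_lessD1 order_less_le_trans)

lemma coeff2_monomial_mult_hyp1F1:
  "coeff2 (fps_const (fps_const c) * fpsX2 ^ k * fpsY2 ^ l * hyp1F1_x a d * hyp1F1_negy b e) p q
   = (if k \<le> p \<and> l \<le> q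
      then c * hyp1F1_coeff a d (p - k) * (hyp1F1_coeff b e (q - l) * (-1)^(q - l)) else 0)"
proof -
  define G where "G = Abs_fps (\<lambda>j. hyp1F1_coeff b e j * (-1) ^ j)"
  have separate: "fps_const (fps_const c) * fpsX2 ^ k * fpsY2 ^ l * hyp1F1_x a d * hyp1F1_negy b e
     = fps_X ^ k * (hyp1F1_x a d * fps_const (fps_const c * fps_X ^ l * G))"
    by (simp add: fpsX2_def fpsY2_def hyp1F1_negy_def G_def mult_ac)
  show ?thesis
    unfolding coeff2_def separate fps_X_power_mult_nth fps_mult_right_const_nth
    by (auto simp: hyp1F1_x_def G_def fps_X_power_mult_nth mult.assoc)
qed

lemma coeff2_Horn_H4_minus_product:
  assumes "pochhammer (1 - a) q \<noteq> 0" and "pochhammer d p \<noteq> 0"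
  shows "coeff2 (Horn_H4 a b d - hyp1F1_x a d * hyp1F1_negy b (1 - a)) p q
    = pochhammer b q * (-1)^q / (pochhammer d p * pochhammer (1 - a) q * fact p * fact q)
      * (poch_int a (int p - int q) * pochhammer (1 - a) q * (-1)^q - pochhammer a p)"
proof -
  have "(-1::complex)^q * (-1)^q = 1"
    by (simp flip: power_add mult_2)
  then show ?thesis
    using assms
    by (simp add: coeff2_def Horn_H4_def hyp1F1_x_def hyp1F1_negy_def hyp1F1_coeff_def field_simps)
qed

lemma coeff2_sum_monomial_mult_hyp1F1:
  assumes "p < n"
  shows "coeff2 (\<Sum>k<n. \<Sum>l\<in>{1..k}. fps_const (fps_const (c k l)) * fpsX2 ^ k * fpsY2 ^ l
        * hyp1F1_x (a + of_nat k) (d + of_nat k) * hyp1F1_negy (b + of_nat l) (e + of_nat l)) p q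
    = (\<Sum>k\<in>{1..p}. \<Sum>l\<in>{1..k}. if l \<le> q
        then c k l * hyp1F1_coeff (a + of_nat k) (d + of_nat k) (p - k)
          * (hyp1F1_coeff (b + of_nat l) (e + of_nat l) (q - l) * (-1)^(q - l))
        else 0)"
proof -
  have "coeff2 (\<Sum>k<n. \<Sum>l\<in>{1..k}. fps_const (fps_const (c k l)) * fpsX2 ^ k * fpsY2 ^ l
        * hyp1F1_x (a + of_nat k) (d + of_nat k) * hyp1F1_negy (b + of_nat l) (e + of_nat l)) p q
    = (\<Sum>k<n. \<Sum>l\<in>{1..k}. if k \<le> p \<and> l \<le> q
        then c k l * hyp1F1_coeff (a + of_nat k) (d + of_nat k) (p - k)
          * (hyp1F1_coeff (b + of_nat l) (e + of_nat l) (q - l) * (-1)^(q - l))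
        else 0)"
    using coeff2_monomial_mult_hyp1F1[unfolded coeff2_def] by (simp add: coeff2_def fps_sum_nth)
  also have "\<dots> = (\<Sum>k\<in>{1..p}. \<Sum>l\<in>{1..k}. if k \<le> p \<and> l \<le> q
        then c k l * hyp1F1_coeff (a + of_nat k) (d + of_nat k) (p - k)
          * (hyp1F1_coeff (b + of_nat l) (e + of_nat l) (q - l) * (-1)^(q - l))
        else 0)"
    using assms by (intro sum.mono_neutral_right) auto
  finally show ?thesis by simp
qed

lemma expansion_coeff_factorization:
  assumes a: "pochhammer (1 - a) q \<noteq> 0" and d: "pochhammer d p \<noteq> 0"
    and kl: "1 \<le> l" "l \<le> k" "k \<le> p"
  shows "(if l \<le> q
      then (-1) ^ (k + l) * fact (k - 1) / (fact (l - 1) * fact l * fact (k - l))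
           * pochhammer b l / (pochhammer (1 - a) l * pochhammer d k)
        * hyp1F1_coeff (a + of_nat k) (d + of_nat k) (p - k)
        * (hyp1F1_coeff (b + of_nat l) (1 - a + of_nat l) (q - l) * (-1)^(q - l))
      else 0)
    = pochhammer b q * (-1)^q / (pochhammer d p * pochhammer (1 - a) q * fact p * fact q)
      * ((-1)^k * of_nat (p choose k) * fact k * of_nat ((k - 1) choose (l - 1))
         * of_nat (q choose l) * pochhammer (a + of_nat k) (p - k))"
proof (cases "l \<le> q")
  case False
  then show ?thesis by simp
next
  case True
  have dp: "pochhammer d p = pochhammer d k * pochhammer (d + of_nat k) (p - k)"
    using kl by (intro pochhammer_product) simp
  have ap: "pochhammer (1 - a) q = pochhammer (1 - a) l * pochhammer (1 - a + of_nat l) (q - l)"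
    using True by (intro pochhammer_product)
  have bp: "pochhammer b q = pochhammer b l * pochhammer (b + of_nat l) (q - l)"
    using True by (intro pochhammer_product)
  have a1: "pochhammer (1 - a) l \<noteq> 0" and a2: "pochhammer (1 - a + of_nat l) (q - l) \<noteq> 0"
    using a ap by auto
  have d1: "pochhammer d k \<noteq> 0" and d2: "pochhammer (d + of_nat k) (p - k) \<noteq> 0"
    using d dp by auto
  have b1: "(of_nat (p choose k) :: complex) = fact p / (fact k * fact (p - k))"
    using kl by (intro binomial_fact) simp
  have b2: "(of_nat ((k - 1) choose (l - 1)) :: complex) = fact (k - 1) / (fact (l - 1) * fact (k - l))"
    using kl binomial_fact[of "l - 1" "k - 1", where 'a = complex] by simp
  have b3: "(of_nat (q choose l) :: complex) = fact q / (fact l * fact (q - l))"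
    using True by (intro binomial_fact)
  have sign: "(-1::complex) ^ (k + l) * (-1) ^ (q - l) = (-1)^k * (-1)^q"
    using True by (simp flip: power_add)
  show ?thesis
    unfolding hyp1F1_coeff_def dp ap bp b1 b2 b3
    using True d1 d2 a1 a2 sign by (simp add: field_simps)
qed

theorem mainTheorem8:
  fixes a b d :: complex
  assumes "a \<notin> \<int>"
    and "\<forall>n::nat. d \<noteq> - of_nat n"
  shows "fps2_sums
     (\<lambda>k. \<Sum>l\<in>{1..k}.
        fps_const (fps_const
          ((-1) ^ (k + l) * fact (k - 1) / (fact (l - 1) * fact l * fact (k - l))
           * pochhammer b l / (pochhammer (1 - a) l * pochhammer d k)))
        * fpsX2 ^ k * fpsY2 ^ l
        * hyp1F1_x (a + of_nat k) (d + of_nat k)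
        * hyp1F1_negy (b + of_nat l) (1 - a + of_nat l))
     (Horn_H4 a b d - hyp1F1_x a d * hyp1F1_negy b (1 - a))"
proof (rule fps2_sums_if_coeff_stable, goal_cases)
  case (1 n p q)
  have "1 - a \<notin> \<int>"
    using assms(1) Ints_diff[OF Ints_1, of "1 - a"] by auto
  then have a: "pochhammer (1 - a) q \<noteq> 0"
    by (rule pochhammer_nonzero_if_not_Ints)
  have d: "pochhammer d p \<noteq> 0"
    using assms(2) by (auto simp: pochhammer_eq_0_iff)
  define F where "F = pochhammer b q * (-1)^q / (pochhammer d p * pochhammer (1 - a) q * fact p * fact q)"
  have "coeff2 (Horn_H4 a b d - hyp1F1_x a d * hyp1F1_negy b (1 - a)) p q
    = F * (\<Sum>k\<in>{1..p}. \<Sum>l\<in>{1..k}. (-1)^k * of_nat (p choose k) * fact k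
        * of_nat ((k - 1) choose (l - 1)) * of_nat (q choose l) * pochhammer (a + of_nat k) (p - k))"
    unfolding F_def coeff2_Horn_H4_minus_product[OF a d] poch_int_diff_expansion[OF assms(1)] ..
  also have "\<dots> = (\<Sum>k\<in>{1..p}. \<Sum>l\<in>{1..k}. if l \<le> q
      then (-1) ^ (k + l) * fact (k - 1) / (fact (l - 1) * fact l * fact (k - l))
           * pochhammer b l / (pochhammer (1 - a) l * pochhammer d k)
        * hyp1F1_coeff (a + of_nat k) (d + of_nat k) (p - k)
        * (hyp1F1_coeff (b + of_nat l) (1 - a + of_nat l) (q - l) * (-1)^(q - l))
      else 0)"
    unfolding F_def sum_distrib_left
    by (intro sum.cong refl) (simp add: expansion_coeff_factorization[OF a d])
  finally show ?case
    by (simp only: coeff2_sum_monomial_mult_hyp1F1[OF 1])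
qed

end
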